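(* For the two-pathogen model described in the context with positive parameters: (1) If $s=0$, $\mathcal{R}_{0,A}>1$ and $\mathcal{R}_{0,B}<1$, the disease-$B$-free equilibrium $(S_A,I_A,\widetilde I_A,S_B,I_B,\widetilde I_B)=(1-\bar I_A-\tfrac{\tau_R}{\tau_I}\bar I_A,\bar I_A,\bar I_A,1,0,0)$ is locally asymptotically stable; symmetrically, if $s=0$, $\mathcal{R}_{0,B}>1$ and $\mathcal{R}_{0,A}<1$, the disease-$A$-free equilibrium $(1,0,0,1-\bar I_B-\tfrac{\tau_R}{\tau_I}\bar I_B,\bar I_B,\bar I_B)$ is locally asymptotically stable. (2) If $s=1$, $\mathcal{R}_{0,A}>1$ and $\mathcal{R}_{0,B}<e^{k\bar I_A}$, the disease-$B$-free equilibrium is locally asymptotically stable, and in this case $\mathcal{R}_{0,A}>\mathcal{R}_{0,B}$; symmetrically, if $s=1$, $\mathcal{R}_{0,B}>1$ and $\mathcal{R}_{0,A}<e^{k\bar I_B}$, the disease-$A$-free equilibrium is locally asymptotically stable and $\mathcal{R}_{0,B}>\mathcal{R}_{0,A}$. (3) If $s\in(0,1)$, $\mathcal{R}_{0,A}>1$ and $\mathcal{R}_{0,B}<\dfrac{e^{k\bar I_A}}{e^{k\bar I_A}-s(e^{k\bar I_A}-1)}$, the disease-$B$-free equilibrium is locally asymptotically stable, and $\mathcal{R}_{0,A}>\mathcal{R}_{0,B}$; symmetrically, if $s\in(0,1)$, $\mathcal{R}_{0,B}>1$ and $\mathcal{R}_{0,A}<\dfrac{e^{k\bar I_B}}{e^{k\bar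 I_B}-s(e^{k\bar I_B}-1)}$, the disease-$A$-free equilibrium is locally asymptotically stable and $\mathcal{R}_{0,B}>\mathcal{R}_{0,A}$.
   Context: Model: for $i\in\{A,B\}$ with $j$ denoting the other disease, state variables $S_i,I_i,R_i,\widetilde I_i$ satisfy $\dot S_i=-\beta_i S_iI_i+R_i/\tau_R$, $\dot I_i=\beta_iS_iI_i-I_i/\tau_I$, $\dot R_i=I_i/\tau_I-R_i/\tau_R$, $\dot{\widetilde I}_i=(I_i-\widetilde I_i)/\tau_P$, with $S_i+I_i+R_i=1$, where $\beta_i=\beta_{0,i}\,e^{-k\widetilde I_i}\bigl(1-s(1-e^{-k\widetilde I_j})\bigr)$. All parameters $\beta_{0,A},\beta_{0,B},\tau_I,\tau_R,\tau_P,k$ are positive and $s\in[0,1]$ is the spillover constant. $\mathcal{R}_{0,i}=\beta_{0,i}\tau_I$. When $\mathcal{R}_{0,i}>1$, $\bar I_i$ denotes the unique positive solution of $e^{kI}=\beta_{0,i}\tau_I-\beta_{0,i}(\tau_I+\tau_R)I$. The reduced system is obtained by substituting $R_i=1-S_i-I_i$ and keeping only the equations for $S_i,I_i,\widetilde I_i$; equilibria are written in the order $(S_A,I_A,\widetilde I_A,S_B,I_B,\widetilde I_B)$. Locally asymptotically stable means all eigenvalues of the Jacobian of the reduced system at the equilibrium have negative real part. *)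

theory Defs
  imports "HOL-Analysis.Analysis"
begin

definition beta_eff :: "real \<Rightarrow> real \<Rightarrow> real \<Rightarrow> real \<Rightarrow> real \<Rightarrow> real" where
  "beta_eff b0 k s Ti Tj = b0 * exp (- k * Ti) * (1 - s * (1 - exp (- k * Tj)))"

text \<open>Vector field of the reduced system (R_i = 1 - S_i - I_i substituted).\<close>
definition reduced_field ::
  "real \<Rightarrow> real \<Rightarrow> real \<Rightarrow> real \<Rightarrow> real \<Rightarrow> real \<Rightarrow> real \<Rightarrow> real^6 \<Rightarrow> real^6" where
  "reduced_field b0A b0B tauI tauR tauP k s x =
     (let SA = x$1; IA = x$2; TA = x$3; SB = x$4; IB = x$5; TB = x$6;
          bA = beta_eff b0A k s TA TB; bB = beta_eff b0B k s TB TA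
      in vector [
           - bA * SA * IA + (1 - SA - IA) / tauR,
           bA * SA * IA - IA / tauI,
           (IA - TA) / tauP,
           - bB * SB * IB + (1 - SB - IB) / tauR,
           bB * SB * IB - IB / tauI,
           (IB - TB) / tauP])"

definition cplx_eigenvalue :: "real^'n^'n \<Rightarrow> complex \<Rightarrow> bool" where
  "cplx_eigenvalue J mu \<longleftrightarrow>
     (\<exists>v::complex^'n. v \<noteq> 0 \<and> (map_matrix complex_of_real J) *v v = mu *s v)"

definition loc_asym_stable :: "(real^'n \<Rightarrow> real^'n) \<Rightarrow> real^'n \<Rightarrow> bool" where
  "loc_asym_stable F x \<longleftrightarrow>
     (\<forall>mu. cplx_eigenvalue (jacobian F (at x)) mu \<longrightarrow> Re mu < 0)"

definition Ibar :: "real \<Rightarrow> real \<Rightarrow> real \<Rightarrow> real \<Rightarrow> real" where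
  "Ibar b0 tauI tauR k = (THE I. I > 0 \<and> exp (k * I) = b0 * tauI - b0 * (tauI + tauR) * I)"

definition B_free_eq :: "real \<Rightarrow> real \<Rightarrow> real \<Rightarrow> real \<Rightarrow> real^6" where
  "B_free_eq b0A tauI tauR k =
     (let I = Ibar b0A tauI tauR k in vector [1 - I - tauR / tauI * I, I, I, 1, 0, 0])"

definition A_free_eq :: "real \<Rightarrow> real \<Rightarrow> real \<Rightarrow> real \<Rightarrow> real^6" where
  "A_free_eq b0B tauI tauR k =
     (let I = Ibar b0B tauI tauR k in vector [1, 0, 0, 1 - I - tauR / tauI * I, I, I])"

end

theory Submission
  imports Defs
begin

text \<open>At the B-free equilibrium I_B = 0, so the B-equations do not feel the A-coordinates and the
  Jacobian is block triangular. Up to reordering, the B-block is triangular with eigenvalues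
  -1/tau_R, -1/tau_P and beta_B - 1/tau_I, where beta_B = beta_0B (1 - s (1 - exp (-k Ibar_A)));
  the last one is negative exactly when R_0B < exp (k Ibar_A) / (exp (k Ibar_A) - s (exp (k Ibar_A) - 1)),
  which is 1 for s = 0 and exp (k Ibar_A) for s = 1. The A-block is the linearisation of the
  endemic equilibrium of a single disease; its characteristic polynomial is a cubic with positive
  coefficients satisfying the Routh-Hurwitz inequality a2 a1 > a0. The threshold is at most
  exp (k Ibar_A) < R_0A, which gives R_0A > R_0B. The A-free case follows by exchanging the two
  diseases, a symmetry of the model.\<close>

lemma exhaust_6:
  fixes x :: 6
  shows "x = 1 \<or> x = 2 \<or> x = 3 \<or> x = 4 \<or> x = 5 \<or> x = 6"
proof (induct x)
  case (of_int z)
  then have "z = 0 \<or> z = 1 \<or> z = 2 \<or> z = 3 \<or> z = 4 \<or> z = 5" by fastforce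
  then show ?case by auto
qed

lemma forall_6: "(\<forall>i::6. P i) \<longleftrightarrow> P 1 \<and> P 2 \<and> P 3 \<and> P 4 \<and> P 5 \<and> P 6"
  by (metis exhaust_6)

lemma numeral_6_wrap: "(7::6) = 1" "(8::6) = 2" "(9::6) = 3"
  by simp_all

lemma UNIV_6: "UNIV = {1, 2, 3, 4, 5, 6::6}"
  using exhaust_6 by auto

lemma sum_6: "sum f (UNIV::6 set) = f 1 + f 2 + f 3 + f 4 + f 5 + f 6"
  unfolding UNIV_6 by (simp add: ac_simps)

lemma vector_6 [simp]:
  "(vector [x1, x2, x3, x4, x5, x6] :: 'a::zero^6) $ 1 = x1"
  "(vector [x1, x2, x3, x4, x5, x6] :: 'a::zero^6) $ 2 = x2"
  "(vector [x1, x2, x3, x4, x5, x6] :: 'a::zero^6) $ 3 = x3"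
  "(vector [x1, x2, x3, x4, x5, x6] :: 'a::zero^6) $ 4 = x4"
  "(vector [x1, x2, x3, x4, x5, x6] :: 'a::zero^6) $ 5 = x5"
  "(vector [x1, x2, x3, x4, x5, x6] :: 'a::zero^6) $ 6 = x6"
  unfolding vector_def by simp_all

lemma has_derivative_vec_componentwise:
  fixes f :: "real^'n \<Rightarrow> real^'m"
  assumes "\<And>i. ((\<lambda>x. f x $ i) has_derivative (\<lambda>h. f' h $ i)) (at a)"
  shows "(f has_derivative f') (at a)"
  using assms
  by (auto simp: has_derivative_componentwise_within[of f f' a UNIV] Basis_vec_def inner_axis)

lemma has_derivative_vec_nth [derivative_intros]:
  "((\<lambda>x::real^'n. x $ i) has_derivative (\<lambda>h. h $ i)) F"
  by (rule bounded_linear_imp_has_derivative) (rule bounded_linear_vec_nth)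

definition block_eigenvalue :: "real^'n^'n \<Rightarrow> 'n set \<Rightarrow> complex \<Rightarrow> bool" where
  "block_eigenvalue J K mu \<longleftrightarrow>
     (\<exists>v. (\<exists>i\<in>K. v i \<noteq> 0) \<and> (\<forall>i\<in>K. (\<Sum>j\<in>K. of_real (J$i$j) * v j) = mu * v i))"

lemma cplx_eigenvalue_block_triangular:
  fixes J :: "real^'n^'n"
  assumes "cplx_eigenvalue J mu" and zero: "\<And>i j. i \<in> K \<Longrightarrow> j \<in> - K \<Longrightarrow> J$i$j = 0"
  shows "block_eigenvalue J K mu \<or> block_eigenvalue J (- K) mu"
proof -
  obtain v :: "complex^'n" where "v \<noteq> 0"
    and ev: "\<And>i. (\<Sum>j\<in>K. of_real (J$i$j) * v$j) + (\<Sum>j\<in>-K. of_real (J$i$j) * v$j) = mu * v$i"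
    using assms(1)
    by (auto simp: cplx_eigenvalue_def matrix_vector_mult_def vec_eq_iff
        sum.subset_diff[of K UNIV] Compl_eq_Diff_UNIV add.commute)
  show ?thesis
  proof (cases "\<exists>i\<in>K. v$i \<noteq> 0")
    case True
    have "(\<Sum>j\<in>K. of_real (J$i$j) * v$j) = mu * v$i" if "i \<in> K" for i
      using ev[of i] zero[OF that] by simp
    with True show ?thesis
      unfolding block_eigenvalue_def by (intro disjI1 exI[of _ "\<lambda>j. v$j"]) blast
  next
    case False
    with \<open>v \<noteq> 0\<close> have "\<exists>i\<in>-K. v$i \<noteq> 0"
      by (auto simp: vec_eq_iff)
    moreover have "(\<Sum>j\<in>-K. of_real (J$i$j) * v$j) = mu * v$i" for i
      using ev[of i] False by simp
    ultimately show ?thesis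
      unfolding block_eigenvalue_def by (intro disjI2 exI[of _ "\<lambda>j. v$j"]) blast
  qed
qed

lemma block_eigenvalue_3E:
  fixes J :: "real^'n^'n"
  assumes "block_eigenvalue J {i1, i2, i3} mu" and "distinct [i1, i2, i3]"
  obtains v1 v2 v3 where "v1 \<noteq> 0 \<or> v2 \<noteq> 0 \<or> v3 \<noteq> 0"
    and "of_real (J$i1$i1) * v1 + of_real (J$i1$i2) * v2 + of_real (J$i1$i3) * v3 = mu * v1"
    and "of_real (J$i2$i1) * v1 + of_real (J$i2$i2) * v2 + of_real (J$i2$i3) * v3 = mu * v2"
    and "of_real (J$i3$i1) * v1 + of_real (J$i3$i2) * v2 + of_real (J$i3$i3) * v3 = mu * v3"
  using assms unfolding block_eigenvalue_def by (auto simp: add.assoc)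

lemma cplx_eigenvalue_permute:
  fixes J J' :: "real^'n^'n"
  assumes "bij \<sigma>" and entries: "\<And>i j. J'$i$j = J$\<sigma> i$\<sigma> j" and "cplx_eigenvalue J mu"
  shows "cplx_eigenvalue J' mu"
proof -
  obtain v :: "complex^'n" where "v \<noteq> 0" and ev: "\<And>i. (\<Sum>j\<in>UNIV. of_real (J$i$j) * v$j) = mu * v$i"
    using assms(3) by (auto simp: cplx_eigenvalue_def matrix_vector_mult_def vec_eq_iff)
  define w :: "complex^'n" where "w = (\<chi> i. v $ \<sigma> i)"
  have "w \<noteq> 0"
    using \<open>v \<noteq> 0\<close> \<open>bij \<sigma>\<close> by (simp add: w_def vec_eq_iff) (metis bij_pointE)
  moreover have "(\<Sum>j\<in>UNIV. of_real (J'$i$j) * w$j) = mu * w$i" for i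
    using ev[of "\<sigma> i"] sum.reindex_bij_betw[OF \<open>bij \<sigma>\<close>, of "\<lambda>j. of_real (J$\<sigma> i$j) * v$j"]
    by (simp add: w_def entries)
  ultimately show ?thesis
    unfolding cplx_eigenvalue_def by (auto simp: matrix_vector_mult_def vec_eq_iff)
qed

lemma cubic_Routh_Hurwitz:
  fixes mu :: complex and a2 a1 a0 :: real
  assumes "a2 > 0" "a1 > 0" "a0 > 0" "a2 * a1 > a0"
    and root: "mu^3 + of_real a2 * mu^2 + of_real a1 * mu + of_real a0 = 0"
  shows "Re mu < 0"
proof (rule ccontr)
  obtain x y where mu: "mu = Complex x y" by (cases mu)
  assume "\<not> Re mu < 0"
  then have x: "x \<ge> 0" using mu by simp
  have "Re (mu^3 + of_real a2 * mu^2 + of_real a1 * mu + of_real a0) = 0"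
       "Im (mu^3 + of_real a2 * mu^2 + of_real a1 * mu + of_real a0) = 0"
    using root by simp_all
  then have re: "x^3 - 3*x*y^2 + a2*(x^2 - y^2) + a1*x + a0 = 0"
    and im: "y * (3*x^2 - y^2 + 2*a2*x + a1) = 0"
    by (simp_all add: mu power3_eq_cube power2_eq_square algebra_simps)
  show False
  proof (cases "y = 0")
    case True
    with re have "x^3 + a2*x^2 + a1*x + a0 = 0" by simp
    moreover have "x^3 + a2*x^2 + a1*x \<ge> 0" using x assms by simp
    ultimately show False using assms by linarith
  next
    case False
    \<comment> \<open>eliminating y^2 makes the real part strictly negative, since a2 a1 > a0\<close>
    with im have y2: "y^2 = 3*x^2 + 2*a2*x + a1" by simp
    have "x^3 - 3*x*y^2 + a2*(x^2 - y^2) + a1*x + a0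
       = -8*x^3 - 8*a2*x^2 - (2*a1 + 2*a2^2)*x - (a2*a1 - a0)"
      unfolding y2 by (simp add: algebra_simps power2_eq_square power3_eq_cube)
    moreover have "8*x^3 + 8*a2*x^2 + (2*a1 + 2*a2^2)*x \<ge> 0"
      using x assms by simp
    ultimately show False using re assms by linarith
  qed
qed

lemma endemic_block_eigenvalue_Re_neg:
  fixes J :: "real^'n^'n"
  assumes "block_eigenvalue J {i1, i2, i3} mu" "distinct [i1, i2, i3]"
    and pos: "a > 0" "r > 0" "i > 0" "p > 0" "c > 0"
    and J: "J$i1$i1 = -a - r" "J$i1$i2 = -(i + r)" "J$i1$i3 = c"
           "J$i2$i1 = a" "J$i2$i2 = 0" "J$i2$i3 = -c"
           "J$i3$i1 = 0" "J$i3$i2 = p" "J$i3$i3 = -p"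
  shows "Re mu < 0"
proof -
  obtain v1 v2 v3 where nz: "v1 \<noteq> 0 \<or> v2 \<noteq> 0 \<or> v3 \<noteq> 0"
    and ev: "of_real (J$i1$i1) * v1 + of_real (J$i1$i2) * v2 + of_real (J$i1$i3) * v3 = mu * v1"
      "of_real (J$i2$i1) * v1 + of_real (J$i2$i2) * v2 + of_real (J$i2$i3) * v3 = mu * v2"
      "of_real (J$i3$i1) * v1 + of_real (J$i3$i2) * v2 + of_real (J$i3$i3) * v3 = mu * v3"
    using block_eigenvalue_3E[OF assms(1,2)] by blast
  have e1: "(- of_real a - of_real r) * v1 - (of_real i + of_real r) * v2 + of_real c * v3 = mu * v1"
    using ev(1) by (simp add: J algebra_simps)
  have e2: "of_real a * v1 - of_real c * v3 = mu * v2"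
    using ev(2) by (simp add: J algebra_simps)
  have e3: "of_real p * v2 - of_real p * v3 = mu * v3"
    using ev(3) by (simp add: J algebra_simps)
  define a2 a1 a0 where "a2 = a + r + p" and "a1 = a * (i + r) + p * (a + r) + c * p"
    and "a0 = p * (r * c + a * i + a * r)"
  \<comment> \<open>the characteristic polynomial of the block, which annihilates every component of the eigenvector\<close>
  define q where "q = mu^3 + of_real a2 * mu^2 + of_real a1 * mu + of_real a0"
  have "q * v1 = 0" "q * v2 = 0" "q * v3 = 0"
    unfolding q_def a2_def a1_def a0_def of_real_add of_real_mult
    using e1 e2 e3 by algebra+
  with nz have "q = 0" by auto
  moreover have "a2 > 0" "a1 > 0" "a0 > 0"
    using pos by (simp_all add: a2_def a1_def a0_def add_pos_pos)
  moreover have "a2 * a1 - a0 = (a + r) * (a * (i + r) + p * (a + r)) + a * c * p + p * p * (a + r) + c * p * p"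
    unfolding a2_def a1_def a0_def by (simp add: algebra_simps)
  then have "a2 * a1 > a0"
    using pos by (smt (verit) mult_pos_pos add_pos_pos)
  ultimately show ?thesis
    using cubic_Routh_Hurwitz[of a2 a1 a0 mu] by (simp add: q_def)
qed

lemma triangular_block_eigenvalue_Re_neg:
  fixes J :: "real^'n^'n"
  assumes "block_eigenvalue J {i1, i2, i3} mu" "distinct [i1, i2, i3]"
    and diag: "J$i1$i1 < 0" "J$i2$i2 < 0" "J$i3$i3 < 0"
    and zero: "J$i1$i3 = 0" "J$i2$i1 = 0" "J$i2$i3 = 0" "J$i3$i1 = 0"
  shows "Re mu < 0"
proof -
  obtain v1 v2 v3 where nz: "v1 \<noteq> 0 \<or> v2 \<noteq> 0 \<or> v3 \<noteq> 0"
    and ev: "of_real (J$i1$i1) * v1 + of_real (J$i1$i2) * v2 + of_real (J$i1$i3) * v3 = mu * v1"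
      "of_real (J$i2$i1) * v1 + of_real (J$i2$i2) * v2 + of_real (J$i2$i3) * v3 = mu * v2"
      "of_real (J$i3$i1) * v1 + of_real (J$i3$i2) * v2 + of_real (J$i3$i3) * v3 = mu * v3"
    using block_eigenvalue_3E[OF assms(1,2)] by blast
  have e1: "of_real (J$i1$i1) * v1 + of_real (J$i1$i2) * v2 = mu * v1"
    using ev(1) by (simp add: zero)
  have e2: "(of_real (J$i2$i2) - mu) * v2 = 0"
    using ev(2) by (simp add: zero algebra_simps)
  have e3: "of_real (J$i3$i2) * v2 + of_real (J$i3$i3) * v3 = mu * v3"
    using ev(3) by (simp add: zero)
  consider "v2 \<noteq> 0" | "v2 = 0" "v1 \<noteq> 0" | "v2 = 0" "v3 \<noteq> 0"
    using nz by blast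
  then have "mu = of_real (J$i2$i2) \<or> mu = of_real (J$i1$i1) \<or> mu = of_real (J$i3$i3)"
  proof cases
    case 1
    with e2 show ?thesis by simp
  next
    case 2
    with e1 have "(of_real (J$i1$i1) - mu) * v1 = 0" by (simp add: algebra_simps)
    with 2 show ?thesis by simp
  next
    case 3
    with e3 have "(of_real (J$i3$i3) - mu) * v3 = 0" by (simp add: algebra_simps)
    with 3 show ?thesis by simp
  qed
  with diag show ?thesis by auto
qed

lemma Ibar_root:
  assumes "b0 > 0" "tauI > 0" "tauR > 0" "k > 0" "b0 * tauI > 1"
  shows "Ibar b0 tauI tauR k > 0"
    and "exp (k * Ibar b0 tauI tauR k) = b0 * tauI - b0 * (tauI + tauR) * Ibar b0 tauI tauR k"
proof -
  define g where "g I = exp (k * I) + b0 * (tauI + tauR) * I - b0 * tauI" for I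
  have "strict_mono g"
    unfolding g_def using assms by (intro strict_monoI diff_strict_right_mono add_strict_mono) auto
  have g1: "g 1 = exp k + b0 * tauR"
    by (simp add: g_def algebra_simps)
  have "g 0 < 0" "g 1 > 0"
    using assms by (simp_all add: g_def[of 0] g1 add_pos_pos)
  moreover have "continuous_on {0..1} g"
    unfolding g_def by (intro continuous_intros)
  ultimately obtain x where "x \<ge> 0" "g x = 0"
    using IVT'[of g 0 0 1] by auto
  with \<open>g 0 < 0\<close> have "x > 0"
    by (cases "x = 0") auto
  have "(THE I. I > 0 \<and> g I = 0) = x"
    using \<open>x > 0\<close> \<open>g x = 0\<close> strict_mono_eq[OF \<open>strict_mono g\<close>]
    by (intro the_equality) (simp, metis)
  then have "Ibar b0 tauI tauR k = x"
    unfolding Ibar_def g_def by (simp add: algebra_simps)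
  with \<open>x > 0\<close> \<open>g x = 0\<close> show "Ibar b0 tauI tauR k > 0"
    and "exp (k * Ibar b0 tauI tauR k) = b0 * tauI - b0 * (tauI + tauR) * Ibar b0 tauI tauR k"
    by (simp_all add: g_def)
qed

definition reduced_jacobian ::
  "real \<Rightarrow> real \<Rightarrow> real \<Rightarrow> real \<Rightarrow> real \<Rightarrow> real \<Rightarrow> real \<Rightarrow> real^6 \<Rightarrow> real^6^6" where
  "reduced_jacobian b0A b0B tauI tauR tauP k s x =
    (let SA = x$1; IA = x$2; TA = x$3; SB = x$4; IB = x$5; TB = x$6;
         bA = beta_eff b0A k s TA TB; bB = beta_eff b0B k s TB TA;
         dA = b0A * s * k * exp (- k * TA) * exp (- k * TB);
         dB = b0B * s * k * exp (- k * TB) * exp (- k * TA)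
     in vector [
       vector [- bA * IA - 1/tauR, - bA * SA - 1/tauR, k * bA * SA * IA, 0, 0, dA * SA * IA],
       vector [bA * IA, bA * SA - 1/tauI, - k * bA * SA * IA, 0, 0, - dA * SA * IA],
       vector [0, 1/tauP, - 1/tauP, 0, 0, 0],
       vector [0, 0, dB * SB * IB, - bB * IB - 1/tauR, - bB * SB - 1/tauR, k * bB * SB * IB],
       vector [0, 0, - dB * SB * IB, bB * IB, bB * SB - 1/tauI, - k * bB * SB * IB],
       vector [0, 0, 0, 0, 1/tauP, - 1/tauP]])"

lemma has_derivative_reduced_field:
  assumes "tauI \<noteq> 0" "tauR \<noteq> 0" "tauP \<noteq> 0"
  shows "(reduced_field b0A b0B tauI tauR tauP k s has_derivative
           (\<lambda>h. reduced_jacobian b0A b0B tauI tauR tauP k s x *v h)) (at x)"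
proof (rule has_derivative_vec_componentwise)
  fix i :: 6
  show "((\<lambda>y. reduced_field b0A b0B tauI tauR tauP k s y $ i) has_derivative
          (\<lambda>h. (reduced_jacobian b0A b0B tauI tauR tauP k s x *v h) $ i)) (at x)"
    using exhaust_6[of i]
    by (elim disjE; simp add: reduced_field_def reduced_jacobian_def Let_def beta_eff_def
        matrix_vector_mult_def sum_6;
        auto intro!: derivative_eq_intros ext simp: algebra_simps;
        simp add: field_simps assms)
qed

lemma jacobian_reduced_field:
  assumes "tauI \<noteq> 0" "tauR \<noteq> 0" "tauP \<noteq> 0"
  shows "jacobian (reduced_field b0A b0B tauI tauR tauP k s) (at x) =
         reduced_jacobian b0A b0B tauI tauR tauP k s x"
  unfolding jacobian_def
  using frechet_derivative_at[OF has_derivative_reduced_field[OF assms]]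
  by (metis matrix_of_matrix_vector_mul)

text \<open>Index arithmetic in the numeral type \<open>6\<close> is modulo 6, so \<open>i + 3\<close> exchanges
  the coordinates of disease A with those of disease B.\<close>

definition swap_diseases :: "real^6 \<Rightarrow> real^6" where
  "swap_diseases x = (\<chi> i. x $ (i + 3))"

lemma A_free_eq_swap_diseases:
  "A_free_eq b0 tauI tauR k = swap_diseases (B_free_eq b0 tauI tauR k)"
  by (simp add: A_free_eq_def B_free_eq_def swap_diseases_def Let_def vec_eq_iff forall_6 numeral_6_wrap)

lemma reduced_jacobian_swap_diseases:
  "reduced_jacobian b0B b0A tauI tauR tauP k s x $ i $ j =
   reduced_jacobian b0A b0B tauI tauR tauP k s (swap_diseases x) $ (i + 3) $ (j + 3)"
  using exhaust_6[of i] exhaust_6[of j]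
  by (elim disjE) (simp_all add: reduced_jacobian_def swap_diseases_def Let_def numeral_6_wrap ac_simps)

lemma loc_asym_stable_swap_diseases:
  assumes "tauI \<noteq> 0" "tauR \<noteq> 0" "tauP \<noteq> 0"
    and "loc_asym_stable (reduced_field b0B b0A tauI tauR tauP k s) x"
  shows "loc_asym_stable (reduced_field b0A b0B tauI tauR tauP k s) (swap_diseases x)"
  using assms(4) cplx_eigenvalue_permute[OF bij_plus_right reduced_jacobian_swap_diseases]
  by (simp add: loc_asym_stable_def jacobian_reduced_field[OF assms(1-3)])

lemma Ibar_infection_balance:
  assumes "b0 > 0" "tauI > 0" "tauR > 0" "k > 0" "b0 * tauI > 1"
  shows "b0 * exp (- (k * Ibar b0 tauI tauR k)) *
           (1 - Ibar b0 tauI tauR k - tauR / tauI * Ibar b0 tauI tauR k) = 1 / tauI"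
proof -
  define I where "I = Ibar b0 tauI tauR k"
  have "b0 * tauI * (1 - I - tauR / tauI * I) = b0 * tauI - b0 * (tauI + tauR) * I"
    using assms by (simp add: field_simps)
  also have "\<dots> = exp (k * I)"
    using Ibar_root(2)[OF assms] by (simp add: I_def)
  finally show ?thesis
    using assms by (simp add: I_def[symmetric] field_simps exp_minus)
qed

lemma reduced_jacobian_B_free_block:
  assumes "x $ 5 = 0" "i \<in> {4, 5, 6}" "j \<in> {1, 2, 3}"
  shows "reduced_jacobian b0A b0B tauI tauR tauP k s x $ i $ j = 0"
  using assms by (auto simp: reduced_jacobian_def Let_def)

lemma loc_asym_stable_B_free_eq:
  assumes pos: "b0A > 0" "tauI > 0" "tauR > 0" "tauP > 0" "k > 0"
    and RA: "b0A * tauI > 1"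
    and RB: "b0B * tauI * (1 - s * (1 - exp (- k * Ibar b0A tauI tauR k))) < 1"
  shows "loc_asym_stable (reduced_field b0A b0B tauI tauR tauP k s) (B_free_eq b0A tauI tauR k)"
proof -
  define I where "I = Ibar b0A tauI tauR k"
  define S where "S = 1 - I - tauR / tauI * I"
  define b where "b = b0A * exp (- (k * I))"
  have "I > 0" "b > 0"
    using Ibar_root(1)[OF pos(1-3,5) RA] pos by (simp_all add: I_def b_def)
  have bS: "b * S = 1 / tauI"
    using Ibar_infection_balance[OF pos(1-3,5) RA] by (simp add: b_def S_def I_def)
  have "k * b * S * I = k * I * (b * S)"
    by (simp add: ac_simps)
  then have "k * b * S * I > 0"
    using pos \<open>I > 0\<close> bS by simp
  have "beta_eff b0B k s 0 I * tauI < 1"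
    using RB by (simp add: beta_eff_def I_def ac_simps)
  then have "beta_eff b0B k s 0 I < 1 / tauI"
    using pos by (simp add: pos_less_divide_eq)
  define J where "J = reduced_jacobian b0A b0B tauI tauR tauP k s (vector [S, I, I, 1, 0, 0])"
  have "B_free_eq b0A tauI tauR k = vector [S, I, I, 1, 0, 0]"
    by (simp add: B_free_eq_def I_def S_def Let_def)
  then have jac: "jacobian (reduced_field b0A b0B tauI tauR tauP k s) (at (B_free_eq b0A tauI tauR k)) = J"
    using pos by (simp add: J_def jacobian_reduced_field)
  have J_A: "J$1$1 = - b * I - 1 / tauR" "J$1$2 = - b * S - 1 / tauR" "J$1$3 = k * b * S * I"
    "J$2$1 = b * I" "J$2$2 = b * S - 1 / tauI" "J$2$3 = - k * b * S * I"
    "J$3$1 = 0" "J$3$2 = 1 / tauP" "J$3$3 = - 1 / tauP"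
    by (simp_all add: J_def reduced_jacobian_def Let_def beta_eff_def b_def)
  have J_B: "J$4$4 = - 1 / tauR" "J$5$5 = beta_eff b0B k s 0 I - 1 / tauI" "J$6$6 = - 1 / tauP"
    "J$4$6 = 0" "J$5$4 = 0" "J$5$6 = 0" "J$6$4 = 0"
    by (simp_all add: J_def reduced_jacobian_def Let_def)
  have "Re mu < 0" if ev: "cplx_eigenvalue J mu" for mu
  proof -
    have "- {4, 5, 6::6} = {1, 2, 3}"
      using exhaust_6 by auto
    then consider "block_eigenvalue J {4, 5, 6} mu" | "block_eigenvalue J {1, 2, 3} mu"
      using cplx_eigenvalue_block_triangular[OF ev, of "{4, 5, 6}"]
        reduced_jacobian_B_free_block[of "vector [S, I, I, 1, 0, 0]"]
      by (auto simp: J_def)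
    then show ?thesis
    proof cases
      case 1
      then show ?thesis
        by (rule triangular_block_eigenvalue_Re_neg)
          (use pos \<open>beta_eff b0B k s 0 I < 1 / tauI\<close> in \<open>simp_all add: J_B\<close>)
    next
      case 2
      then show ?thesis
        by (rule endemic_block_eigenvalue_Re_neg[where a = "b * I" and r = "1 / tauR" and i = "b * S"
              and p = "1 / tauP" and c = "k * b * S * I"])
          (use pos \<open>I > 0\<close> \<open>b > 0\<close> \<open>k * b * S * I > 0\<close> bS in \<open>simp_all add: J_A\<close>)
    qed
  qed
  then show ?thesis
    by (simp add: loc_asym_stable_def jac)
qed

lemma loc_asym_stable_B_free_eq_threshold:
  assumes pos: "b0A > 0" "tauI > 0" "tauR > 0" "tauP > 0" "k > 0" and s: "0 \<le> s" "s \<le> 1"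
    and RA: "b0A * tauI > 1"
    and RB: "b0B * tauI < exp (k * Ibar b0A tauI tauR k) /
      (exp (k * Ibar b0A tauI tauR k) - s * (exp (k * Ibar b0A tauI tauR k) - 1))"
  shows "loc_asym_stable (reduced_field b0A b0B tauI tauR tauP k s) (B_free_eq b0A tauI tauR k)
    \<and> b0B * tauI < b0A * tauI"
proof -
  define I where "I = Ibar b0A tauI tauR k"
  define E where "E = exp (k * I)"
  define D where "D = E - s * (E - 1)"
  have "I > 0" and root: "E = b0A * tauI - b0A * (tauI + tauR) * I"
    using Ibar_root[OF pos(1-3,5) RA] by (simp_all add: I_def E_def)
  have "E > 1"
    using pos \<open>I > 0\<close> by (simp add: E_def)
  have "D = 1 + (1 - s) * (E - 1)"
    by (simp add: D_def algebra_simps)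
  then have "D \<ge> 1"
    using s \<open>E > 1\<close> by simp
  have "b0B * tauI * D < E"
    using RB \<open>D \<ge> 1\<close> by (simp add: E_def D_def I_def pos_less_divide_eq)
  moreover have "1 - s * (1 - exp (- k * I)) = D / E"
    using \<open>E > 1\<close> by (simp add: D_def E_def field_simps exp_minus)
  ultimately have "b0B * tauI * (1 - s * (1 - exp (- k * I))) < 1"
    using \<open>E > 1\<close> by (simp add: mult_divide_mult_cancel_left_if pos_divide_less_eq)
  moreover have "E / D \<le> E"
    using \<open>D \<ge> 1\<close> \<open>E > 1\<close> by (simp add: divide_le_eq)
  moreover have "E < b0A * tauI"
    using root pos \<open>I > 0\<close> by simp
  ultimately show ?thesis
    using loc_asym_stable_B_free_eq[OF pos(1-5) RA] RB by (simp add: I_def E_def D_def)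
qed

lemma loc_asym_stable_A_free_eq_threshold:
  assumes pos: "b0B > 0" "tauI > 0" "tauR > 0" "tauP > 0" "k > 0" and s: "0 \<le> s" "s \<le> 1"
    and RB: "b0B * tauI > 1"
    and RA: "b0A * tauI < exp (k * Ibar b0B tauI tauR k) /
      (exp (k * Ibar b0B tauI tauR k) - s * (exp (k * Ibar b0B tauI tauR k) - 1))"
  shows "loc_asym_stable (reduced_field b0A b0B tauI tauR tauP k s) (A_free_eq b0B tauI tauR k)
    \<and> b0A * tauI < b0B * tauI"
  using loc_asym_stable_B_free_eq_threshold[OF assms] pos
  by (simp add: A_free_eq_swap_diseases loc_asym_stable_swap_diseases)

theorem theorem4:
  fixes b0A b0B tauI tauR tauP k s :: real
  assumes pos: "b0A > 0" "b0B > 0" "tauI > 0" "tauR > 0" "tauP > 0" "k > 0"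
    and s_range: "0 \<le> s" "s \<le> 1"
  defines "F \<equiv> reduced_field b0A b0B tauI tauR tauP k s"
    and "R0A \<equiv> b0A * tauI" and "R0B \<equiv> b0B * tauI"
    and "IA \<equiv> Ibar b0A tauI tauR k" and "IB \<equiv> Ibar b0B tauI tauR k"
    and "EB \<equiv> B_free_eq b0A tauI tauR k" and "EA \<equiv> A_free_eq b0B tauI tauR k"
  shows
    "(s = 0 \<and> R0A > 1 \<and> R0B < 1 \<longrightarrow> loc_asym_stable F EB) \<and>
     (s = 0 \<and> R0B > 1 \<and> R0A < 1 \<longrightarrow> loc_asym_stable F EA) \<and>
     (s = 1 \<and> R0A > 1 \<and> R0B < exp (k * IA) \<longrightarrow> loc_asym_stable F EB \<and> R0A > R0B) \<and>
     (s = 1 \<and> R0B > 1 \<and> R0A < exp (k * IB) \<longrightarrow> loc_asym_stable F EA \<and> R0B > R0A) \<and>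
     (0 < s \<and> s < 1 \<and> R0A > 1 \<and>
        R0B < exp (k * IA) / (exp (k * IA) - s * (exp (k * IA) - 1))
        \<longrightarrow> loc_asym_stable F EB \<and> R0A > R0B) \<and>
     (0 < s \<and> s < 1 \<and> R0B > 1 \<and>
        R0A < exp (k * IB) / (exp (k * IB) - s * (exp (k * IB) - 1))
        \<longrightarrow> loc_asym_stable F EA \<and> R0B > R0A)"
  using loc_asym_stable_B_free_eq_threshold[OF pos(1,3-6) s_range]
    loc_asym_stable_A_free_eq_threshold[OF pos(2-6) s_range]
  unfolding assms(9-15) by auto

end
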